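(* As an identity of formal power series in $q$ with integer coefficients, $$\sum_{n=0}^\infty\big[(q)_\infty-(q)_n\big] =(q)_\infty\sum_{k=1}^\infty\frac{q^k}{1-q^k} +\sum_{r=1}^\infty(-1)^r\Big[(3r-1)q^{r(3r-1)/2}+3r\,q^{r(3r+1)/2}\Big].$$
   Context: For $n$ a nonnegative integer or $n=\infty$, $(a)_n=\prod_{k=1}^n(1-aq^{k-1})$; in particular $(q)_n=\prod_{k=1}^n(1-q^k)$ and $(q)_0=1$. All series are formal power series in $q$ (the sum on the left converges $q$-adically since $(q)_\infty-(q)_n$ is divisible by $q^{n+1}$). *)

theory Defs
  imports "HOL-Computational_Algebra.Formal_Power_Series"
begin

definition qpoch :: "nat \<Rightarrow> int fps" where
  "qpoch n = (\<Prod>k=1..n. 1 - fps_X ^ k)"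

text \<open>(q)_infinity: the q-adic limit of (q)_n (fps carries the q-adic metric).\<close>
definition qpoch_inf :: "int fps" where
  "qpoch_inf = lim qpoch"

text \<open>q^k / (1 - q^k): the quotient of q^k by the unit 1 - q^k in Z[[q]] (k >= 1).\<close>
definition qfrac :: "nat \<Rightarrow> int fps" where
  "qfrac k = (THE g. (1 - fps_X ^ k) * g = fps_X ^ k)"

end

(*
  Fine's function F(y) = 1 - \<Sum>n. y^(n+2) q^(n+1) (yq)_n satisfies the functional equation
  F(y) = 1 - y^2 q - y^3 q^2 F(yq); iterating it gives
  F(y) = \<Sum>n. (-1)^n y^(3n) q^(n(3n+1)/2) (1 - y^2 q^(2n+1)).
  Differentiating both sides at y = 1 gives the theorem. The derivative of (yq)_n at y = 1 is
  -(q)_n \<Sum>k<n. q^(k+1)/(1-q^(k+1)), so the terms q^(n+1) (q)_n (1 - \<Sum>k<n. q^(k+1)/(1-q^(k+1)))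
  telescope to (q)_N \<Sum>k<N. q^(k+1)/(1-q^(k+1)) and in the limit to (q)_inf times the Lambert
  series; the remaining terms (n+1) q^(n+1) (q)_n have partial sums -\<Sum>n<N. ((q)_N - (q)_n),
  which gives the left-hand side. The right-hand side is the derivative of the pentagonal series.
  Differentiation at y = 1 is done algebraically: y = 1 + t with coefficients in 'a[t], and the
  derivative is the coefficient of t.
*)

theory Submission
  imports Defs "HOL-Computational_Algebra.Polynomial"
begin

unbundle fps_syntax

subsection \<open>$q$-adic series\<close>

lemma fps_X_power_dvd_iff:
  "fps_X ^ m dvd (f :: 'a::comm_ring_1 fps) \<longleftrightarrow> (\<forall>k<m. f $ k = 0)"
proof
  assume "fps_X ^ m dvd f"
  then obtain g where "f = fps_X ^ m * g" by (rule dvdE)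
  then show "\<forall>k<m. f $ k = 0" by (simp add: fps_X_power_mult_nth)
next
  assume "\<forall>k<m. f $ k = 0"
  then have "f = fps_X ^ m * fps_shift m f"
    by (auto simp: fps_eq_iff fps_X_power_mult_nth)
  then show "fps_X ^ m dvd f" by (rule dvdI)
qed

lemma fps_X_power_dvd_nth:
  "fps_X ^ m dvd (f :: 'a::comm_ring_1 fps) \<Longrightarrow> k < m \<Longrightarrow> f $ k = 0"
  by (simp add: fps_X_power_dvd_iff)

lemma fps_mult_nth_cong:
  assumes "\<And>j. j \<le> k \<Longrightarrow> f $ j = f' $ j" "\<And>j. j \<le> k \<Longrightarrow> g $ j = g' $ j"
  shows "((f :: 'a::comm_semiring_1 fps) * g) $ k = (f' * g') $ k"
  unfolding fps_mult_nth using assms by (intro sum.cong) auto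

lemma LIMSEQ_fps_if_nth_stable:
  fixes f :: "nat \<Rightarrow> 'a::group_add fps"
  assumes "\<And>n k. k < n \<Longrightarrow> f n $ k = g $ k"
  shows "f \<longlonglongrightarrow> g"
  unfolding tendsto_fps_iff eventually_sequentially
  using assms by (metis Suc_le_lessD)

text \<open>Under the hypothesis \<^prop>\<open>fps_X ^ n dvd f n\<close> only \<open>f 0, \<dots>, f k\<close> contribute to the
  coefficient of \<open>X^k\<close>, and this is the \<open>q\<close>-adic sum (see \<open>sums_fps_series\<close>).\<close>

definition fps_series :: "(nat \<Rightarrow> 'a::comm_monoid_add fps) \<Rightarrow> 'a fps" where
  "fps_series f = Abs_fps (\<lambda>k. \<Sum>n\<le>k. f n $ k)"

lemma fps_series_nth: "fps_series f $ k = (\<Sum>n\<le>k. f n $ k)"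
  by (simp add: fps_series_def)

lemma nth_sum_eq_fps_series:
  fixes f :: "nat \<Rightarrow> 'a::comm_ring_1 fps"
  assumes "\<And>n. fps_X ^ n dvd f n" and "k < N"
  shows "(\<Sum>n<N. f n) $ k = fps_series f $ k"
proof -
  have "(\<Sum>n<N. f n) $ k = (\<Sum>n<N. f n $ k)" by (simp add: fps_sum_nth)
  also have "\<dots> = (\<Sum>n\<le>k. f n $ k)"
    using assms fps_X_power_dvd_nth[OF assms(1)]
    by (intro sum.mono_neutral_right) (auto simp: not_le)
  finally show ?thesis by (simp add: fps_series_nth)
qed

lemma sums_fps_series:
  fixes f :: "nat \<Rightarrow> 'a::comm_ring_1 fps"
  assumes "\<And>n. fps_X ^ n dvd f n"
  shows "f sums fps_series f"
  unfolding sums_def using assms by (intro LIMSEQ_fps_if_nth_stable nth_sum_eq_fps_series)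

lemma fps_series_add: "fps_series (\<lambda>n. f n + g n) = fps_series f + fps_series g"
  by (simp add: fps_eq_iff fps_series_nth sum.distrib)

lemma fps_series_diff:
  "fps_series (\<lambda>n. (f n :: 'a::ab_group_add fps) - g n) = fps_series f - fps_series g"
  by (simp add: fps_eq_iff fps_series_nth sum_subtractf)

lemma fps_series_shift:
  fixes f :: "nat \<Rightarrow> 'a::comm_ring_1 fps"
  assumes "\<And>n. fps_X ^ n dvd f n"
  shows "fps_series f = f 0 + fps_series (\<lambda>n. f (Suc n))"
proof (rule fps_ext)
  fix k
  have "f (Suc k) $ k = 0" using assms by (rule fps_X_power_dvd_nth) simp
  then have "fps_series f $ k = (\<Sum>n\<le>Suc k. f n $ k)" by (simp add: fps_series_nth)
  also have "\<dots> = f 0 $ k + (\<Sum>n\<le>k. f (Suc n) $ k)" by (rule sum.atMost_Suc_shift)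
  finally show "fps_series f $ k = (f 0 + fps_series (\<lambda>n. f (Suc n))) $ k"
    by (simp add: fps_series_nth)
qed

subsection \<open>Fine's function\<close>

primrec qpoch_at :: "'a::comm_ring_1 fps \<Rightarrow> nat \<Rightarrow> 'a fps" where
  "qpoch_at y 0 = 1"
| "qpoch_at y (Suc n) = qpoch_at y n * (1 - y * fps_X ^ Suc n)"

lemma qpoch_at_Suc': "qpoch_at y (Suc n) = (1 - y * fps_X) * qpoch_at (y * fps_X) n"
  by (induction n) (simp_all add: mult_ac)

definition fine_term :: "'a::comm_ring_1 fps \<Rightarrow> nat \<Rightarrow> 'a fps" where
  "fine_term y n = fps_X ^ Suc n * (y ^ Suc (Suc n) * qpoch_at y n)"

definition fine_series :: "'a::comm_ring_1 fps \<Rightarrow> 'a fps" where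
  "fine_series y = 1 - fps_series (fine_term y)"

definition fine_remainder :: "'a::comm_ring_1 fps \<Rightarrow> nat \<Rightarrow> 'a fps" where
  "fine_remainder y n = fps_X ^ n * (y ^ n * qpoch_at (y * fps_X) n)"

lemma fps_X_power_dvd_fine_term: "fps_X ^ n dvd fine_term y n"
  unfolding fine_term_def by (intro dvd_mult2 le_imp_power_dvd) simp

lemma fine_term_Suc:
  "fine_term y (Suc n) =
     y ^ 3 * fps_X ^ 2 * (fine_remainder y n - fine_remainder y (Suc n) - fine_term (y * fps_X) n)"
proof -
  have "fine_term y (Suc n) =
      fps_X ^ Suc (Suc n) * (y ^ Suc (Suc (Suc n)) * ((1 - y * fps_X) * qpoch_at (y * fps_X) n))"
    by (simp only: fine_term_def qpoch_at_Suc')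
  then show ?thesis
    by (simp add: fine_term_def fine_remainder_def algebra_simps power_mult_distrib
        numeral_3_eq_3 power2_eq_square)
qed

lemma sum_fine_term:
  "(\<Sum>n<Suc M. fine_term y n) =
     y ^ 2 * fps_X + y ^ 3 * fps_X ^ 2 *
       (1 - fine_remainder y M - (\<Sum>n<M. fine_term (y * fps_X) n))"
proof -
  have "(\<Sum>n<Suc M. fine_term y n) = fine_term y 0 + (\<Sum>n<M. fine_term y (Suc n))"
    by (rule sum.lessThan_Suc_shift)
  also have "(\<Sum>n<M. fine_term y (Suc n)) =
      y ^ 3 * fps_X ^ 2 * ((\<Sum>n<M. fine_remainder y n - fine_remainder y (Suc n))
        - (\<Sum>n<M. fine_term (y * fps_X) n))"
    by (simp add: fine_term_Suc sum_distrib_left sum_subtractf right_diff_distrib)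
  also have "(\<Sum>n<M. fine_remainder y n - fine_remainder y (Suc n)) = 1 - fine_remainder y M"
    by (simp only: sum_lessThan_telescope') (simp add: fine_remainder_def)
  finally show ?thesis
    by (simp add: fine_term_def power2_eq_square)
qed

lemma fine_series_functional_eq:
  "fine_series y = 1 - y ^ 2 * fps_X - y ^ 3 * fps_X ^ 2 * fine_series (y * fps_X)"
proof (rule fps_ext)
  fix k
  define M where "M = Suc k"
  define S where "S = (\<Sum>n<M. fine_term (y * fps_X) n)"
  have tail: "(y ^ 3 * fps_X ^ 2 * (1 - fine_remainder y M - S)) $ k =
      (y ^ 3 * fps_X ^ 2 * fine_series (y * fps_X)) $ k"
  proof (rule fps_mult_nth_cong)
    fix j assume "j \<le> k"
    then have "fine_remainder y M $ j = 0"
      unfolding fine_remainder_def M_def by (intro fps_X_power_dvd_nth[OF dvd_triv_left]) simp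
    moreover have "S $ j = fps_series (fine_term (y * fps_X)) $ j"
      unfolding S_def using \<open>j \<le> k\<close>
      by (intro nth_sum_eq_fps_series) (simp_all add: fps_X_power_dvd_fine_term M_def)
    ultimately show "(1 - fine_remainder y M - S) $ j = fine_series (y * fps_X) $ j"
      by (simp add: fine_series_def)
  qed simp
  have "fps_series (fine_term y) $ k = (\<Sum>n<Suc M. fine_term y n) $ k"
    by (rule nth_sum_eq_fps_series[symmetric]) (simp_all add: fps_X_power_dvd_fine_term M_def)
  also have "\<dots> = (y ^ 2 * fps_X + y ^ 3 * fps_X ^ 2 * (1 - fine_remainder y M - S)) $ k"
    by (simp only: sum_fine_term S_def)
  also have "\<dots> = (y ^ 2 * fps_X + y ^ 3 * fps_X ^ 2 * fine_series (y * fps_X)) $ k"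
    using tail by simp
  finally show "fine_series y $ k =
      (1 - y ^ 2 * fps_X - y ^ 3 * fps_X ^ 2 * fine_series (y * fps_X)) $ k"
    by (simp add: fine_series_def)
qed

primrec pent :: "nat \<Rightarrow> nat" where
  "pent 0 = 0"
| "pent (Suc n) = pent n + 3 * n + 2"

lemma le_pent: "n \<le> pent n"
  by (induction n) simp_all

lemma two_pent: "2 * pent n = n * (3 * n + 1)"
  by (induction n) (simp_all add: algebra_simps)

definition pentagonal_term :: "'a::comm_ring_1 fps \<Rightarrow> nat \<Rightarrow> 'a fps" where
  "pentagonal_term y n = fps_X ^ pent n * ((-1) ^ n * y ^ (3 * n) * (1 - y ^ 2 * fps_X ^ (2 * n + 1)))"

lemma fps_X_power_dvd_pentagonal_term: "fps_X ^ n dvd pentagonal_term y n"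
  unfolding pentagonal_term_def by (intro dvd_mult2 le_imp_power_dvd le_pent)

lemma fine_series_step:
  "(-1) ^ N * fps_X ^ pent N * y ^ (3 * N) * fine_series (y * fps_X ^ N) =
     pentagonal_term y N +
     (-1) ^ Suc N * fps_X ^ pent (Suc N) * y ^ (3 * Suc N) * fine_series (y * fps_X ^ Suc N)"
proof -
  define G where "G = fine_series (y * fps_X ^ Suc N)"
  have shift: "y * fps_X ^ N * fps_X = y * fps_X ^ Suc N"
    by (simp add: mult.assoc power_Suc2)
  have square: "(y * fps_X ^ N) ^ 2 * fps_X = y ^ 2 * fps_X ^ (2 * N + 1)"
    by (simp add: power_mult_distrib power_add mult.commute[of 2 N] power_mult)
  have cube: "(y * fps_X ^ N) ^ 3 * fps_X ^ 2 = y ^ 3 * fps_X ^ (3 * N + 2)"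
    by (simp add: power_mult_distrib power_add mult.commute[of 3 N] power_mult power2_eq_square mult_ac)
  have step: "fine_series (y * fps_X ^ N) =
      1 - y ^ 2 * fps_X ^ (2 * N + 1) - y ^ 3 * fps_X ^ (3 * N + 2) * G"
    using fine_series_functional_eq[of "y * fps_X ^ N"] unfolding shift square cube G_def .
  show ?thesis
    unfolding G_def[symmetric] pentagonal_term_def step
    by (simp add: algebra_simps power_add)
qed

lemma fine_series_iterate:
  "fine_series y =
     (\<Sum>n<N. pentagonal_term y n) + (-1) ^ N * fps_X ^ pent N * y ^ (3 * N) * fine_series (y * fps_X ^ N)"
  by (induction N) (simp_all add: fine_series_step)

theorem fine_series_eq_pentagonal: "fine_series y = fps_series (pentagonal_term y)"
proof (rule fps_ext)
  fix k
  define N where "N = Suc k"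
  have "fps_X ^ N dvd (-1) ^ N * fps_X ^ pent N * y ^ (3 * N) * fine_series (y * fps_X ^ N)"
    by (intro dvd_mult2 dvd_mult le_imp_power_dvd le_pent)
  then have "((-1) ^ N * fps_X ^ pent N * y ^ (3 * N) * fine_series (y * fps_X ^ N)) $ k = 0"
    by (rule fps_X_power_dvd_nth) (simp add: N_def)
  then have "fine_series y $ k = (\<Sum>n<N. pentagonal_term y n) $ k"
    by (subst fine_series_iterate[of y N]) simp
  also have "\<dots> = fps_series (pentagonal_term y) $ k"
    by (rule nth_sum_eq_fps_series) (simp_all add: fps_X_power_dvd_pentagonal_term N_def)
  finally show "fine_series y $ k = fps_series (pentagonal_term y) $ k" .
qed

subsection \<open>Differentiation at $y = 1$\<close>

text \<open>Applied to an expression in \<open>y := one_plus_t\<close>,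
  they give its value and its \<open>y\<close>-derivative at \<open>y = 1\<close>.\<close>

definition const_part :: "'a::comm_ring_1 poly fps \<Rightarrow> 'a fps" where
  "const_part f = Abs_fps (\<lambda>k. coeff (f $ k) 0)"

definition linear_part :: "'a::comm_ring_1 poly fps \<Rightarrow> 'a fps" where
  "linear_part f = Abs_fps (\<lambda>k. coeff (f $ k) 1)"

definition one_plus_t :: "'a::comm_ring_1 poly fps" where
  "one_plus_t = fps_const [:1, 1:]"

lemma const_part_nth [simp]: "const_part f $ k = coeff (f $ k) 0"
  by (simp add: const_part_def)

lemma linear_part_nth [simp]: "linear_part f $ k = coeff (f $ k) 1"
  by (simp add: linear_part_def)

lemma const_part_diff [simp]: "const_part (f - g) = const_part f - const_part g"
  and const_part_uminus [simp]: "const_part (- f) = - const_part f"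
  and const_part_one [simp]: "const_part 1 = 1"
  and const_part_fps_X [simp]: "const_part fps_X = fps_X"
  and const_part_one_plus_t [simp]: "const_part one_plus_t = 1"
  by (simp_all add: fps_eq_iff fps_X_nth one_plus_t_def)

lemma linear_part_diff [simp]: "linear_part (f - g) = linear_part f - linear_part g"
  and linear_part_uminus [simp]: "linear_part (- f) = - linear_part f"
  and linear_part_one [simp]: "linear_part 1 = 0"
  and linear_part_fps_X [simp]: "linear_part fps_X = 0"
  and linear_part_one_plus_t [simp]: "linear_part one_plus_t = 1"
  by (simp_all add: fps_eq_iff fps_X_nth one_plus_t_def)

lemma const_part_mult [simp]: "const_part (f * g) = const_part f * const_part g"
  by (simp add: fps_eq_iff fps_mult_nth coeff_sum coeff_mult_0)

lemma coeff_mult_1: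
  "coeff (p * q) 1 = coeff p 0 * coeff q 1 + coeff p 1 * (coeff q 0 :: 'a::comm_semiring_1)"
  by (simp add: coeff_mult atMost_Suc add.commute)

lemma linear_part_mult [simp]:
  "linear_part (f * g) = const_part f * linear_part g + linear_part f * const_part g"
  by (simp add: fps_eq_iff fps_mult_nth coeff_sum coeff_mult_1 sum.distrib del: One_nat_def)

lemma const_part_power [simp]: "const_part (f ^ n) = const_part f ^ n"
  by (induction n) simp_all

lemma linear_part_power_eq_0: "linear_part f = 0 \<Longrightarrow> linear_part (f ^ n) = 0"
  by (induction n) simp_all

lemma linear_part_fps_X_power [simp]: "linear_part (fps_X ^ n) = 0"
  by (simp add: linear_part_power_eq_0)

lemma linear_part_power:
  "const_part f = 1 \<Longrightarrow> linear_part (f ^ n) = of_nat n * linear_part f"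
  by (induction n) (simp_all add: algebra_simps)

lemma linear_part_fps_series:
  "linear_part (fps_series f) = fps_series (\<lambda>n. linear_part (f n))"
  by (simp add: fps_eq_iff fps_series_nth coeff_sum)

subsection \<open>The $q$-series side\<close>

lemma qpoch_0 [simp]: "qpoch 0 = 1"
  by (simp add: qpoch_def)

lemma qpoch_Suc: "qpoch (Suc n) = qpoch n * (1 - fps_X ^ Suc n)"
  by (simp add: qpoch_def prod.nat_ivl_Suc' mult.commute)

lemma qpoch_telescope: "qpoch n = 1 - (\<Sum>m<n. fps_X ^ Suc m * qpoch m)"
  by (induction n) (simp_all add: qpoch_Suc algebra_simps)

lemma qpoch_inf_nth:
  assumes "k < n"
  shows "qpoch_inf $ k = qpoch n $ k"
proof -
  define P where "P = 1 - fps_series (\<lambda>m. fps_X ^ Suc m * qpoch m)"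
  have dvd: "fps_X ^ m dvd fps_X ^ Suc m * qpoch m" for m
    by (intro dvd_mult2 le_imp_power_dvd) simp
  have stable: "qpoch n $ k = P $ k" if "k < n" for n k
    using nth_sum_eq_fps_series[OF dvd that] by (subst qpoch_telescope) (simp add: P_def)
  then have "qpoch \<longlonglongrightarrow> P"
    by (rule LIMSEQ_fps_if_nth_stable)
  then have "qpoch_inf = P"
    unfolding qpoch_inf_def by (rule limI)
  with stable[OF assms] show ?thesis by simp
qed

lemma one_minus_fps_X_power_mult_geometric:
  assumes "0 < k"
  shows "(1 - fps_X ^ k) * Abs_fps (\<lambda>i. if 0 < i \<and> k dvd i then 1 else 0) =
    (fps_X ^ k :: 'a::comm_ring_1 fps)"
    (is "_ * ?g = _")
proof (rule fps_ext)
  fix i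
  have "((1 - fps_X ^ k) * ?g) $ i = ?g $ i - (fps_X ^ k * ?g) $ i"
    by (simp add: algebra_simps)
  also have "\<dots> = (fps_X ^ k :: 'a fps) $ i"
  proof (cases "i < k")
    case True
    then have "\<not> (0 < i \<and> k dvd i)" using dvd_imp_le by fastforce
    with True show ?thesis by (simp add: fps_X_power_mult_nth)
  next
    case False
    with assms show ?thesis
      by (auto simp: fps_X_power_mult_nth dvd_diff_nat le_imp_diff_is_add)
  qed
  finally show "((1 - fps_X ^ k) * ?g) $ i = (fps_X ^ k :: 'a fps) $ i" .
qed

lemma qfrac_eq_Abs_fps:
  assumes "0 < k"
  shows "qfrac k = Abs_fps (\<lambda>i. if 0 < i \<and> k dvd i then 1 else 0)"
    (is "_ = ?g")
  unfolding qfrac_def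
proof (rule the_equality)
  show "(1 - fps_X ^ k) * ?g = fps_X ^ k" using assms by (rule one_minus_fps_X_power_mult_geometric)
next
  fix g assume g: "(1 - fps_X ^ k) * g = (fps_X ^ k :: int fps)"
  have "(1 - fps_X ^ k :: int fps) \<noteq> 0"
  proof
    assume "(1 - fps_X ^ k :: int fps) = 0"
    then have "(1 - fps_X ^ k :: int fps) $ 0 = 0" by simp
    with assms show False by simp
  qed
  moreover have "(1 - fps_X ^ k) * g = (1 - fps_X ^ k) * ?g"
    using g one_minus_fps_X_power_mult_geometric[OF assms, where 'a = int] by simp
  ultimately show "g = ?g" by simp
qed

lemma one_minus_fps_X_power_mult_qfrac: "0 < k \<Longrightarrow> (1 - fps_X ^ k) * qfrac k = fps_X ^ k"
  by (simp add: qfrac_eq_Abs_fps one_minus_fps_X_power_mult_geometric)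

lemma fps_X_power_dvd_qfrac: "fps_X ^ k dvd qfrac k"
proof (cases "k = 0")
  case False
  then show ?thesis
    by (auto simp: fps_X_power_dvd_iff qfrac_eq_Abs_fps dest: dvd_imp_le)
qed simp

lemma const_part_qpoch_at: "const_part (qpoch_at one_plus_t n) = qpoch n"
  by (induction n) (simp_all add: qpoch_Suc)

lemma qpoch_mult_lambert_Suc:
  "qpoch (Suc n) * (\<Sum>k<Suc n. qfrac (Suc k)) =
     qpoch n * (\<Sum>k<n. qfrac (Suc k)) * (1 - fps_X ^ Suc n) + qpoch n * fps_X ^ Suc n"
proof -
  have "qpoch (Suc n) * (\<Sum>k<Suc n. qfrac (Suc k)) =
      qpoch n * (\<Sum>k<n. qfrac (Suc k)) * (1 - fps_X ^ Suc n)
        + qpoch n * ((1 - fps_X ^ Suc n) * qfrac (Suc n))"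
    by (simp add: qpoch_Suc algebra_simps)
  also have "(1 - fps_X ^ Suc n) * qfrac (Suc n) = fps_X ^ Suc n"
    by (rule one_minus_fps_X_power_mult_qfrac) simp
  finally show ?thesis .
qed

lemma linear_part_qpoch_at:
  "linear_part (qpoch_at one_plus_t n) = - (qpoch n * (\<Sum>k<n. qfrac (Suc k)))"
proof (induction n)
  case (Suc n)
  then show ?case
    unfolding qpoch_mult_lambert_Suc by (simp add: const_part_qpoch_at algebra_simps)
qed simp

lemma sum_qpoch_lambert:
  "(\<Sum>n<N. fps_X ^ Suc n * (qpoch n * (1 - (\<Sum>k<n. qfrac (Suc k))))) =
     qpoch N * (\<Sum>k<N. qfrac (Suc k))"
proof (induction N)
  case (Suc N)
  then show ?case
    unfolding qpoch_mult_lambert_Suc by (simp add: algebra_simps)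
qed simp

lemma fps_series_qpoch_lambert:
  "fps_series (\<lambda>n. fps_X ^ Suc n * (qpoch n * (1 - (\<Sum>k<n. qfrac (Suc k))))) =
     qpoch_inf * (\<Sum>k. qfrac (Suc k))"
proof (rule fps_ext)
  fix k
  define N where "N = Suc k"
  have dvd: "fps_X ^ n dvd qfrac (Suc n)" for n
    by (rule dvd_trans[OF le_imp_power_dvd fps_X_power_dvd_qfrac]) simp
  have suminf: "(\<Sum>k. qfrac (Suc k)) = fps_series (\<lambda>k. qfrac (Suc k))"
    using sums_unique[OF sums_fps_series[OF dvd]] by simp
  have "fps_series (\<lambda>n. fps_X ^ Suc n * (qpoch n * (1 - (\<Sum>k<n. qfrac (Suc k))))) $ k =
      (\<Sum>n<N. fps_X ^ Suc n * (qpoch n * (1 - (\<Sum>k<n. qfrac (Suc k))))) $ k"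
    by (rule nth_sum_eq_fps_series[symmetric]) (simp_all add: N_def dvd_mult2 le_imp_power_dvd)
  also have "\<dots> = (qpoch N * (\<Sum>k<N. qfrac (Suc k))) $ k"
    by (simp only: sum_qpoch_lambert)
  also have "\<dots> = (qpoch_inf * (\<Sum>k. qfrac (Suc k))) $ k"
    unfolding suminf
  proof (rule fps_mult_nth_cong)
    fix j assume "j \<le> k"
    then show "qpoch N $ j = qpoch_inf $ j"
      by (simp add: qpoch_inf_nth[of j N] N_def)
    show "(\<Sum>k<N. qfrac (Suc k)) $ j = fps_series (\<lambda>k. qfrac (Suc k)) $ j"
      by (rule nth_sum_eq_fps_series[OF dvd]) (use \<open>j \<le> k\<close> in \<open>simp add: N_def\<close>)
  qed
  finally show "fps_series (\<lambda>n. fps_X ^ Suc n * (qpoch n * (1 - (\<Sum>k<n. qfrac (Suc k))))) $ k =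
      (qpoch_inf * (\<Sum>k. qfrac (Suc k))) $ k" .
qed

lemma sum_qpoch_diff:
  "(\<Sum>n<N. qpoch N - qpoch n) = - (\<Sum>n<N. fps_X ^ Suc n * (of_nat (Suc n) * qpoch n))"
proof (induction N)
  case (Suc N)
  have "(\<Sum>n<Suc N. qpoch (Suc N) - qpoch n) =
      (\<Sum>n<N. qpoch N - qpoch n) + of_nat (Suc N) * (qpoch (Suc N) - qpoch N)"
    by (simp add: sum_subtractf algebra_simps)
  also have "qpoch (Suc N) - qpoch N = - (fps_X ^ Suc N * qpoch N)"
    by (simp add: qpoch_Suc algebra_simps)
  finally show ?case
    using Suc.IH by (simp add: algebra_simps)
qed simp

lemma sums_qpoch_inf_diff:
  "(\<lambda>n. qpoch_inf - qpoch n) sums - fps_series (\<lambda>n. fps_X ^ Suc n * (of_nat (Suc n) * qpoch n))"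
  (is "_ sums - fps_series ?f")
  unfolding sums_def
proof (rule LIMSEQ_fps_if_nth_stable)
  fix N k :: nat assume "k < N"
  have "(\<Sum>n<N. ?f n) $ k = fps_series ?f $ k"
    using \<open>k < N\<close> by (intro nth_sum_eq_fps_series) (simp_all add: dvd_mult2 le_imp_power_dvd)
  moreover have "(\<Sum>n<N. qpoch_inf - qpoch n) $ k = (\<Sum>n<N. qpoch N - qpoch n) $ k"
    using \<open>k < N\<close> by (simp add: fps_sum_nth qpoch_inf_nth)
  ultimately show "(\<Sum>n<N. qpoch_inf - qpoch n) $ k = (- fps_series ?f) $ k"
    by (simp add: sum_qpoch_diff)
qed

lemma linear_part_fine_term:
  "linear_part (fine_term one_plus_t n) =
     fps_X ^ Suc n * (of_nat (Suc n) * qpoch n)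
     + fps_X ^ Suc n * (qpoch n * (1 - (\<Sum>k<n. qfrac (Suc k))))"
  by (simp add: fine_term_def linear_part_power const_part_qpoch_at linear_part_qpoch_at algebra_simps)

lemma linear_part_fine_series:
  "linear_part (fine_series one_plus_t) =
     - fps_series (\<lambda>n. fps_X ^ Suc n * (of_nat (Suc n) * qpoch n)) - qpoch_inf * (\<Sum>k. qfrac (Suc k))"
proof -
  have "linear_part (fine_series one_plus_t) =
      - fps_series (\<lambda>n. fps_X ^ Suc n * (of_nat (Suc n) * qpoch n))
      - fps_series (\<lambda>n. fps_X ^ Suc n * (qpoch n * (1 - (\<Sum>k<n. qfrac (Suc k)))))"
    unfolding fine_series_def linear_part_diff linear_part_fps_series linear_part_fine_term fps_series_add
    by simp
  then show ?thesis by (simp only: fps_series_qpoch_lambert)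
qed

lemma fps_const_neg_one_power_mult:
  "fps_const ((-1) ^ n * of_nat m) = (-1) ^ n * (of_nat m :: 'a::comm_ring_1 fps)"
  by (metis fps_const_mult fps_const_neg fps_const_power fps_of_nat fps_const_1_eq_1)

lemma linear_part_pentagonal_term:
  "linear_part (pentagonal_term one_plus_t n) =
     fps_const ((-1) ^ n * int (3 * n)) * fps_X ^ pent n
     - fps_const ((-1) ^ n * int (3 * n + 2)) * fps_X ^ (pent n + 2 * n + 1)"
  unfolding fps_const_neg_one_power_mult
  by (simp add: pentagonal_term_def linear_part_power linear_part_power_eq_0 power_add
      algebra_simps)

lemma fps_series_linear_part_pentagonal_term:
  "fps_series (\<lambda>n. linear_part (pentagonal_term one_plus_t n)) =
     (\<Sum>r. let r' = Suc r in
        fps_const ((-1) ^ r' * (3 * int r' - 1)) * fps_X ^ (r' * (3 * r' - 1) div 2)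
      + fps_const ((-1) ^ r' * (3 * int r')) * fps_X ^ (r' * (3 * r' + 1) div 2))"
proof -
  define A :: "nat \<Rightarrow> int fps"
    where "A = (\<lambda>n. fps_const ((-1) ^ n * int (3 * n)) * fps_X ^ pent n)"
  define B :: "nat \<Rightarrow> int fps"
    where "B = (\<lambda>n. fps_const ((-1) ^ n * int (3 * n + 2)) * fps_X ^ (pent n + 2 * n + 1))"
  have dvd_A: "fps_X ^ n dvd A n" for n
    unfolding A_def by (intro dvd_mult le_imp_power_dvd le_pent)
  have dvd_B: "fps_X ^ n dvd B n" for n
    unfolding B_def by (intro dvd_mult le_imp_power_dvd) (simp add: le_pent trans_le_add1)
  have dvd_shifted: "fps_X ^ n dvd A (Suc n) - B n" for n
    using dvd_trans[OF le_imp_power_dvd dvd_A, of n "Suc n"] dvd_B by (simp add: dvd_diff)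
  have "fps_series (\<lambda>n. linear_part (pentagonal_term one_plus_t n)) = fps_series A - fps_series B"
    unfolding linear_part_pentagonal_term fps_series_diff A_def B_def ..
  also have "fps_series A = fps_series (\<lambda>n. A (Suc n))"
    using fps_series_shift[OF dvd_A] by (simp add: A_def)
  also have "fps_series (\<lambda>n. A (Suc n)) - fps_series B = fps_series (\<lambda>n. A (Suc n) - B n)"
    by (simp add: fps_series_diff)
  also have "\<dots> = (\<Sum>n. A (Suc n) - B n)"
    using sums_unique[OF sums_fps_series[OF dvd_shifted]] .
  also have "(\<lambda>n. A (Suc n) - B n) = (\<lambda>r. let r' = Suc r in
        fps_const ((-1) ^ r' * (3 * int r' - 1)) * fps_X ^ (r' * (3 * r' - 1) div 2)
      + fps_const ((-1) ^ r' * (3 * int r')) * fps_X ^ (r' * (3 * r' + 1) div 2))"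
  proof
    fix r
    have minus: "Suc r * (3 * Suc r - 1) div 2 = pent r + 2 * r + 1"
      using two_pent[of r] by simp
    have plus: "Suc r * (3 * Suc r + 1) div 2 = pent (Suc r)"
      using two_pent[of "Suc r"] by simp
    have coeff_minus: "(-1 :: int) ^ Suc r * (3 * int (Suc r) - 1) = - ((-1) ^ r * int (3 * r + 2))"
      by simp
    have coeff_plus: "(-1 :: int) ^ Suc r * (3 * int (Suc r)) = (-1) ^ Suc r * int (3 * Suc r)"
      by simp
    show "A (Suc r) - B r = (let r' = Suc r in
        fps_const ((-1) ^ r' * (3 * int r' - 1)) * fps_X ^ (r' * (3 * r' - 1) div 2)
      + fps_const ((-1) ^ r' * (3 * int r')) * fps_X ^ (r' * (3 * r' + 1) div 2))"
      unfolding Let_def minus plus coeff_minus coeff_plus A_def B_def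
      by (simp del: fps_const_neg add: fps_const_neg[symmetric])
  qed
  finally show ?thesis .
qed

theorem theorem1:
  shows "(\<lambda>n. qpoch_inf - qpoch n) sums
           (qpoch_inf * (\<Sum>k. qfrac (Suc k))
            + (\<Sum>r. let r' = Suc r in
                 fps_const ((-1) ^ r' * (3 * int r' - 1)) * fps_X ^ (r' * (3 * r' - 1) div 2)
               + fps_const ((-1) ^ r' * (3 * int r')) * fps_X ^ (r' * (3 * r' + 1) div 2)))"
proof -
  have "linear_part (fine_series (one_plus_t :: int poly fps)) =
      fps_series (\<lambda>n. linear_part (pentagonal_term one_plus_t n))"
    by (simp only: fine_series_eq_pentagonal linear_part_fps_series)
  then have "- fps_series (\<lambda>n. fps_X ^ Suc n * (of_nat (Suc n) * qpoch n)) =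
      qpoch_inf * (\<Sum>k. qfrac (Suc k))
      + (\<Sum>r. let r' = Suc r in
          fps_const ((-1) ^ r' * (3 * int r' - 1)) * fps_X ^ (r' * (3 * r' - 1) div 2)
        + fps_const ((-1) ^ r' * (3 * int r')) * fps_X ^ (r' * (3 * r' + 1) div 2))"
    unfolding linear_part_fine_series fps_series_linear_part_pentagonal_term
    by (simp add: algebra_simps)
  with sums_qpoch_inf_diff show ?thesis by simp
qed

end
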